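(* Let $a,b,c,d$ be integers with $a\neq 0$, $c\neq 0$, $\gcd(a,b)=1$, $\gcd(c,d)=1$, and let $k\ge 2$ be an integer. Then there are no rational numbers $A,B$ such that the polynomial identity $$S_{a,b}^k(Ax^2+B)=S_{c,d}^{2k+1}\!\left(x-\frac{d}{c}+\frac12\right)$$ holds in $\mathbb{Q}[x]$.
   Context: The Bernoulli polynomials $B_n(x)$ are defined by $\frac{t e^{tx}}{e^t-1}=\sum_{n\ge 0}B_n(x)\frac{t^n}{n!}$. For integers $a\neq 0$, $b$ with $\gcd(a,b)=1$ and an integer $k\ge 1$, define the polynomial $$S_{a,b}^k(x):=\frac{a^k}{k+1}\left(B_{k+1}\!\left(x+\frac{b}{a}\right)-B_{k+1}\!\left(\frac{b}{a}\right)\right)\in\mathbb{Q}[x].$$ *)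

theory Defs
  imports "HOL-Computational_Algebra.Polynomial"
begin

text \<open>Bernoulli numbers (convention B_1 = -1/2, matching t/(e^t - 1)), via the
  standard recursion  sum_{j<=n} (n+1 choose j) B_j = 0  for n >= 1, B_0 = 1.\<close>
fun bernoulli_num :: "nat \<Rightarrow> rat" where
  "bernoulli_num n =
     (if n = 0 then 1
      else - (\<Sum>j<n. of_nat ((n + 1) choose j) * (if j < n then bernoulli_num j else 0))
             / of_nat (n + 1))"

definition bernoulli_poly :: "nat \<Rightarrow> rat poly" where
  "bernoulli_poly n = (\<Sum>j\<le>n. monom (of_nat (n choose j) * bernoulli_num j) (n - j))"

definition S_poly :: "int \<Rightarrow> int \<Rightarrow> nat \<Rightarrow> rat poly" where
  "S_poly a b k =
     (let r = of_int b / of_int a :: rat in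
      smult (of_int a ^ k / of_nat (k + 1))
        (pcompose (bernoulli_poly (k + 1)) [:r, 1:]
         - [:poly (bernoulli_poly (k + 1)) r:]))"

end

theory Submission
  imports Defs
begin

text \<open>
  By the Appell property, the coefficient of \<open>x^(n - i)\<close> in \<open>B_n(x + h)\<close> is
  \<open>(n choose i) B_i(h)\<close>. Comparing the coefficients of \<open>x^(2(k + 1 - i))\<close> on both sides
  for \<open>i = 0, 1, 2\<close> therefore gives three equations in \<open>A\<close> and \<open>h = b/a + B\<close>: the
  first fixes the ratio of the leading factors, the second determines \<open>h\<close> as an affine
  function of \<open>A\<close>, and substituting it into the third leaves
  \<open>A\<^sup>2 (2k + 1)(3 - k) = 15\<close>. For \<open>k \<ge> 3\<close> the left-hand side is not positive, and for
  \<open>k = 2\<close> it says \<open>A\<^sup>2 = 3\<close>, which has no rational solution.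
\<close>

lemma bernoulli_num_small:
  "bernoulli_num 0 = 1" "bernoulli_num 1 = -1/2" "bernoulli_num 2 = 1/6"
  "bernoulli_num 3 = 0" "bernoulli_num 4 = -1/30"
  by (simp_all add: bernoulli_num.simps[of 1] bernoulli_num.simps[of 2]
      bernoulli_num.simps[of 3] bernoulli_num.simps[of 4] numeral_eq_Suc lessThan_Suc)

lemma poly_bernoulli_poly_small:
  "poly (bernoulli_poly 0) x = 1"
  "poly (bernoulli_poly 1) x = x - 1/2"
  "poly (bernoulli_poly 2) x = x\<^sup>2 - x + 1/6"
  "poly (bernoulli_poly 4) x = x^4 - 2*x^3 + x\<^sup>2 - 1/30"
  by (simp_all add: bernoulli_poly_def poly_sum poly_monom bernoulli_num_small numeral_eq_Suc
      atMost_Suc binomial_eq_0 algebra_simps power2_eq_square)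

lemma poly_bernoulli_poly_half:
  "poly (bernoulli_poly 2) (1/2) = -1/12" "poly (bernoulli_poly 4) (1/2) = 7/240"
  by (simp_all add: poly_bernoulli_poly_small power2_eq_square power4_eq_xxxx power3_eq_cube)

lemma coeff_linear_poly_power:
  fixes h :: "'a::comm_ring_1"
  shows "coeff ([:h, 1:] ^ n) m = of_nat (n choose m) * h ^ (n - m)"
proof -
  have "[:h, 1:] = monom 1 1 + [:h:]"
    by (simp add: poly_eq_iff coeff_pCons coeff_monom split: nat.split)
  then have "[:h, 1:] ^ n = (\<Sum>j\<le>n. of_nat (n choose j) * monom 1 1 ^ j * [:h:] ^ (n - j))"
    by (simp add: binomial_ring)
  also have "\<dots> = (\<Sum>j\<le>n. monom (of_nat (n choose j) * h ^ (n - j)) j)"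
    by (intro sum.cong refl)
       (simp add: monom_power poly_const_pow of_nat_poly mult_monom flip: monom_0)
  finally show ?thesis
    by (simp add: coeff_sum coeff_monom binomial_eq_0)
qed

lemma pcompose_monom: "pcompose (monom c n) q = smult c (q ^ n)"
  by (induction n) (simp_all add: monom_Suc pcompose_pCons monom_0 algebra_simps)

lemma coeff_pcompose_square:
  fixes A :: "'a::comm_ring_1"
  shows "coeff (pcompose p [:0, 0, A:]) (2 * m) = A ^ m * coeff p m"
proof (induction p arbitrary: m)
  case (pCons c p)
  then show ?case
    by (cases m) (simp_all add: pcompose_pCons coeff_pCons)
qed simp

lemma coeff_bernoulli_poly_shift:
  assumes "i \<le> n"
  shows "coeff (pcompose (bernoulli_poly n) [:h, 1:]) (n - i)
           = of_nat (n choose i) * poly (bernoulli_poly i) h"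
proof -
  have "coeff (pcompose (bernoulli_poly n) [:h, 1:]) (n - i)
      = (\<Sum>j\<le>n. of_nat (n choose j) * bernoulli_num j
                 * (of_nat ((n - j) choose (n - i)) * h ^ (n - j - (n - i))))"
    by (simp add: bernoulli_poly_def pcompose_sum pcompose_monom coeff_sum coeff_linear_poly_power)
  also have "\<dots> = (\<Sum>j\<le>i. of_nat (n choose j) * bernoulli_num j
                 * (of_nat ((n - j) choose (n - i)) * h ^ (n - j - (n - i))))"
    using assms by (intro sum.mono_neutral_right) (auto simp: binomial_eq_0)
  also have "\<dots> = (\<Sum>j\<le>i. of_nat (n choose i) * (of_nat (i choose j) * bernoulli_num j * h ^ (i - j)))"
  proof (intro sum.cong refl)
    fix j assume "j \<in> {..i}"
    then have j: "j \<le> i" by simp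
    have diff: "n - j - (n - i) = i - j"
      using assms j by simp
    then have "(n - j) choose (n - i) = (n - j) choose (i - j)"
      using binomial_symmetric[of "n - i" "n - j"] j by simp
    then have "(n choose j) * ((n - j) choose (n - i)) = (n choose i) * (i choose j)"
      using choose_mult[OF j assms] by simp
    then have "of_nat (n choose j) * of_nat ((n - j) choose (n - i))
                 = (of_nat (n choose i) * of_nat (i choose j) :: rat)"
      by (metis of_nat_mult)
    with diff show "of_nat (n choose j) * bernoulli_num j
                 * (of_nat ((n - j) choose (n - i)) * h ^ (n - j - (n - i)))
               = of_nat (n choose i) * (of_nat (i choose j) * bernoulli_num j * h ^ (i - j))"
      by (metis (no_types, lifting) mult.assoc mult.commute)
  qed
  also have "\<dots> = of_nat (n choose i) * poly (bernoulli_poly i) h"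
    by (simp add: bernoulli_poly_def poly_sum poly_monom sum_distrib_left)
  finally show ?thesis .
qed

lemma coeff_S_poly_shift:
  assumes "i \<le> k"
  shows "coeff (pcompose (S_poly a b k) [:h, 1:]) (k + 1 - i)
           = of_int a ^ k / of_nat (k + 1) * of_nat ((k + 1) choose i)
             * poly (bernoulli_poly i) (of_int b / of_int a + h)"
proof -
  define r :: rat where "r = of_int b / of_int a"
  have "pcompose [:r, 1:] [:h, 1:] = [:r + h, 1:]"
    by (simp add: pcompose_pCons)
  then have "pcompose (S_poly a b k) [:h, 1:]
      = smult (of_int a ^ k / of_nat (k + 1))
          (pcompose (bernoulli_poly (k + 1)) [:r + h, 1:] - [:poly (bernoulli_poly (k + 1)) r:])"
    by (simp add: S_poly_def Let_def r_def pcompose_smult pcompose_diff flip: pcompose_assoc)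
  moreover have "coeff [:poly (bernoulli_poly (k + 1)) r:] (k + 1 - i) = 0"
    using assms by (simp add: coeff_pCons split: nat.split)
  ultimately show ?thesis
    using assms coeff_bernoulli_poly_shift[of i "k + 1" "r + h"] by (simp add: r_def)
qed

lemma S_poly_identity_coeff_eq:
  assumes eq: "pcompose (S_poly a b k) [:B, 0, A:]
                 = pcompose (S_poly c d (2 * k + 1)) [:- (of_int d / of_int c) + 1 / 2, 1:]"
    and "i \<le> k"
  shows "of_int a ^ k / of_nat (k + 1) * A ^ (k + 1 - i) * of_nat ((k + 1) choose i)
           * poly (bernoulli_poly i) (of_int b / of_int a + B)
         = of_int c ^ (2 * k + 1) / of_nat (2 * k + 2) * of_nat ((2 * k + 2) choose (2 * i))
           * poly (bernoulli_poly (2 * i)) (1 / 2)"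
proof -
  have split: "pcompose (S_poly a b k) [:B, 0, A:]
                 = pcompose (pcompose (S_poly a b k) [:B, 1:]) [:0, 0, A:]"
    by (simp add: pcompose_pCons flip: pcompose_assoc)
  have "coeff (pcompose (S_poly a b k) [:B, 0, A:]) (2 * (k + 1 - i))
      = A ^ (k + 1 - i) * (of_int a ^ k / of_nat (k + 1) * of_nat ((k + 1) choose i)
          * poly (bernoulli_poly i) (of_int b / of_int a + B))"
    unfolding split coeff_pcompose_square coeff_S_poly_shift[OF \<open>i \<le> k\<close>] by simp
  moreover have "coeff (pcompose (S_poly c d (2 * k + 1)) [:- (of_int d / of_int c) + 1 / 2, 1:])
                   (2 * k + 1 + 1 - 2 * i)
      = of_int c ^ (2 * k + 1) / of_nat (2 * k + 1 + 1) * of_nat ((2 * k + 1 + 1) choose (2 * i))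
          * poly (bernoulli_poly (2 * i)) (1 / 2)"
    using \<open>i \<le> k\<close> coeff_S_poly_shift[of "2 * i" "2 * k + 1" c d] by simp
  moreover have "2 * (k + 1 - i) = 2 * k + 1 + 1 - 2 * i"
    using \<open>i \<le> k\<close> by simp
  ultimately show ?thesis
    using eq by (simp add: mult_ac)
qed

lemma of_nat_choose_2:
  "(of_nat (n choose 2) :: 'a::field_char_0) = of_nat n * (of_nat n - 1) / 2"
  by (simp add: binomial_gbinomial gbinomial_pochhammer pochhammer_Suc numeral_eq_Suc field_simps)

lemma of_nat_choose_4:
  "(of_nat (n choose 4) :: 'a::field_char_0)
     = of_nat n * (of_nat n - 1) * (of_nat n - 2) * (of_nat n - 3) / 24"
  by (simp add: binomial_gbinomial gbinomial_pochhammer pochhammer_Suc numeral_eq_Suc field_simps)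

text \<open>A rational root of the monic integer polynomial \<open>x\<^sup>2 - 3\<close> would be an integer.\<close>

lemma rat_square_neq_3: "(A::rat)\<^sup>2 \<noteq> 3"
proof
  assume sq: "A\<^sup>2 = 3"
  have "algebraic_int A"
    by (rule algebraic_int.intros[of "[:-3, 0, 1:]"])
       (use sq in \<open>auto simp: coeff_pCons power2_eq_square split: nat.split\<close>)
  then have "A \<in> \<int>"
    by (rule rational_algebraic_int_is_int) (simp add: Rats_def)
  then obtain n where "A = of_int n"
    by (elim Ints_cases)
  with sq have n: "n\<^sup>2 = 3"
    by (metis of_int_eq_iff of_int_numeral of_int_power)
  consider "\<bar>n\<bar> \<le> 1" | "2 \<le> \<bar>n\<bar>"
    by linarith
  then show False
  proof cases
    case 1
    then have "n \<in> {-1, 0, 1}"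
      by auto
    with n show False
      by auto
  next
    case 2
    then have "2\<^sup>2 \<le> \<bar>n\<bar>\<^sup>2"
      by (rule power_mono) simp
    with n show False
      by simp
  qed
qed

lemma coeff_equations_imp_square_eq:
  fixes \<alpha> \<beta> A h :: rat and k :: nat
  assumes "\<beta> \<noteq> 0" and "k \<ge> 2"
    and top: "\<alpha> * A ^ (k + 1) = \<beta>"
    and second: "\<alpha> * A ^ k * (of_nat k + 1) * (h - 1/2)
                   = \<beta> * ((2 * of_nat k + 2) * (2 * of_nat k + 1) / 2) * (-1/12)"
    and third: "\<alpha> * A ^ (k - 1) * ((of_nat k + 1) * of_nat k / 2) * (h\<^sup>2 - h + 1/6)
                  = \<beta> * ((2 * of_nat k + 2) * (2 * of_nat k + 1) * (2 * of_nat k) * (2 * of_nat k - 1) / 24)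
                      * (7/240)"
  shows "A\<^sup>2 * (2 * of_nat k + 1) * (3 - of_nat k) = 15"
proof -
  define K :: rat where "K = of_nat k"
  define P where "P = \<alpha> * A ^ (k - 1)"
  obtain j where "k = j + 2"
    using \<open>k \<ge> 2\<close> by (metis add.commute le_Suc_ex)
  then have powers: "A ^ k = A ^ (k - 1) * A" "A ^ (k + 1) = A ^ (k - 1) * A\<^sup>2"
    by (simp_all add: power2_eq_square)
  have \<beta>: "\<beta> = P * A\<^sup>2" and \<alpha>A: "\<alpha> * A ^ k = P * A"
    using top unfolding P_def powers by (simp_all add: mult_ac)
  have "P \<noteq> 0" "A \<noteq> 0"
    using \<open>\<beta> \<noteq> 0\<close> \<beta> by auto
  have "K + 1 \<noteq> 0" "K \<noteq> 0"
    using \<open>k \<ge> 2\<close> unfolding K_def by simp_all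
  have "(P * A * (K + 1)) * (h - 1/2) = (P * A * (K + 1)) * (- A * (2 * K + 1) / 12)"
    using second unfolding \<beta> \<alpha>A K_def[symmetric] by (simp add: field_simps power2_eq_square)
  then have "h - 1/2 = - A * (2 * K + 1) / 12"
    using \<open>P \<noteq> 0\<close> \<open>A \<noteq> 0\<close> \<open>K + 1 \<noteq> 0\<close> by (metis mult_left_cancel mult_eq_0_iff)
  then have h: "h = 1/2 - A * (2 * K + 1) / 12"
    by (simp add: field_simps)
  have "(P * ((K + 1) * K / 2)) * (h\<^sup>2 - h + 1/6)
          = (P * ((K + 1) * K / 2)) * (A\<^sup>2 * (2 * K + 1) * (2 * K - 1) * 7 / 720)"
    using third unfolding \<beta> P_def[symmetric] K_def[symmetric] by (simp add: field_simps)
  then have "h\<^sup>2 - h + 1/6 = A\<^sup>2 * (2 * K + 1) * (2 * K - 1) * 7 / 720"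
    using \<open>P \<noteq> 0\<close> \<open>K + 1 \<noteq> 0\<close> \<open>K \<noteq> 0\<close> by (metis mult_left_cancel mult_eq_0_iff divide_eq_0_iff zero_neq_numeral)
  then show ?thesis
    unfolding h K_def[symmetric] by (simp add: field_simps power2_eq_square)
qed

lemma S_poly_identity_imp_square_eq:
  assumes eq: "pcompose (S_poly a b k) [:B, 0, A:]
                 = pcompose (S_poly c d (2 * k + 1)) [:- (of_int d / of_int c) + 1 / 2, 1:]"
    and "c \<noteq> 0" and "k \<ge> 2"
  shows "A\<^sup>2 * (2 * of_nat k + 1) * (3 - of_nat k) = 15"
proof -
  define \<alpha> :: rat where "\<alpha> = of_int a ^ k / of_nat (k + 1)"
  define \<beta> :: rat where "\<beta> = of_int c ^ (2 * k + 1) / of_nat (2 * k + 2)"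
  define h :: rat where "h = of_int b / of_int a + B"
  have coeff_eq: "\<alpha> * A ^ (k + 1 - i) * of_nat ((k + 1) choose i) * poly (bernoulli_poly i) h
      = \<beta> * of_nat ((2 * k + 2) choose (2 * i)) * poly (bernoulli_poly (2 * i)) (1 / 2)"
    if "i \<le> k" for i
    using S_poly_identity_coeff_eq[OF eq that] unfolding \<alpha>_def \<beta>_def h_def .
  have "\<beta> \<noteq> 0"
    using \<open>c \<noteq> 0\<close> by (simp add: \<beta>_def)
  show ?thesis
  proof (rule coeff_equations_imp_square_eq[OF \<open>\<beta> \<noteq> 0\<close> \<open>k \<ge> 2\<close>])
    show "\<alpha> * A ^ (k + 1) = \<beta>"
      using coeff_eq[of 0] by (simp add: poly_bernoulli_poly_small)
    have "k + 1 - 1 = k" "k + 1 - 2 = k - 1" "(2::nat) * 1 = 2" "(2::nat) * 2 = 4"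
      by simp_all
    note coeff_eq[of 1, unfolded this] coeff_eq[of 2, unfolded this]
    then show "\<alpha> * A ^ k * (of_nat k + 1) * (h - 1/2)
            = \<beta> * ((2 * of_nat k + 2) * (2 * of_nat k + 1) / 2) * (-1/12)"
      and "\<alpha> * A ^ (k - 1) * ((of_nat k + 1) * of_nat k / 2) * (h\<^sup>2 - h + 1/6)
            = \<beta> * ((2 * of_nat k + 2) * (2 * of_nat k + 1) * (2 * of_nat k) * (2 * of_nat k - 1) / 24)
                * (7/240)"
      using \<open>k \<ge> 2\<close>
      unfolding poly_bernoulli_poly_half
      unfolding poly_bernoulli_poly_small of_nat_choose_2 of_nat_choose_4
      by (simp_all add: algebra_simps)
  qed
qed

theorem mainTheorem7:
  fixes a b c d :: int and k :: nat
  assumes "a \<noteq> 0" and "c \<noteq> 0" and "gcd a b = 1" and "gcd c d = 1" and "k \<ge> 2"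
  shows "\<not> (\<exists>A B :: rat.
            pcompose (S_poly a b k) [:B, 0, A:]
            = pcompose (S_poly c d (2 * k + 1))
                [:- (of_int d / of_int c) + 1 / 2, 1:])"
proof
  assume "\<exists>A B :: rat.
            pcompose (S_poly a b k) [:B, 0, A:]
            = pcompose (S_poly c d (2 * k + 1)) [:- (of_int d / of_int c) + 1 / 2, 1:]"
  then obtain A B :: rat
    where eq: "pcompose (S_poly a b k) [:B, 0, A:]
                 = pcompose (S_poly c d (2 * k + 1)) [:- (of_int d / of_int c) + 1 / 2, 1:]"
    by blast
  have key: "A\<^sup>2 * (2 * of_nat k + 1) * (3 - of_nat k) = 15"
    using S_poly_identity_imp_square_eq[OF eq \<open>c \<noteq> 0\<close> \<open>k \<ge> 2\<close>] .
  moreover have "A\<^sup>2 * (2 * of_nat k + 1) * (3 - of_nat k) \<le> (0::rat)" if "k \<ge> 3"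
    using that by (intro mult_nonneg_nonpos) auto
  ultimately have "k = 2"
    using \<open>k \<ge> 2\<close> by (cases "k \<ge> 3") auto
  with key have "A\<^sup>2 = 3"
    by simp
  with rat_square_neq_3 show False
    by blast
qed

end
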